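(* Let $d_i>0$ for all $i$, $\mathbf{P}\in\mathbb{Z}_{\ge0}^N$ with $P_N>0$, $\mathbf{L}\in\mathbb{R}^{N\times M}$ with non-negative entries and $L_{N,j}>0$ for all $j$, and $\gamma>0$. Let $\tilde{\boldsymbol\alpha}$ be the unique maximizer on the non-negative orthant of $S(\boldsymbol\alpha)=l(\boldsymbol\alpha)-\gamma\|\boldsymbol\alpha\|_2^2$. Then $\tilde{\boldsymbol\alpha}$ is a fixed point of the map $$\mathbf{T}_\gamma(\boldsymbol\alpha)_j=\frac{\big(\mathbf{L}^T(\mathbf{d}\odot e^{-\mathbf{L}\boldsymbol\alpha})\big)_j}{(\mathbf{L}^T\mathbf{P})_j+2\gamma\alpha_j}\,\alpha_j,\qquad j=1,\dots,M.$$ Moreover, if $\boldsymbol\alpha^{(0)}$ is strictly positive then all iterates $\boldsymbol\alpha^{(n+1)}=\mathbf{T}_\gamma(\boldsymbol\alpha^{(n)})$ are strictly positive, a strictly positive fixed point of $\mathbf{T}_\gamma$ is the maximizer of $S$, and if the iterates converge then their limit is the maximizer of $S$ on the non-negative orthant.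
   Context: $l(\boldsymbol\alpha)=\sum_{i=1}^N\big(P_i\log d_i-(\mathbf{L}\boldsymbol\alpha)_iP_i-d_i e^{-(\mathbf{L}\boldsymbol\alpha)_i}-\log(P_i!)\big)$ for $\boldsymbol\alpha\ge0$ (Poisson log-likelihood of the discretized Raman lidar model). $\odot$ denotes the componentwise product and $e^{-\mathbf{L}\boldsymbol\alpha}$ is taken componentwise. *)

theory Defs
  imports "HOL-Analysis.Analysis"
begin

text \<open>Vectors in R^N / R^M are represented as functions nat => real, with indices
  0..N-1 (resp. 0..M-1); the paper's index i = 1..N corresponds to i-1 here,
  so the paper's last index N is N - 1. The matrix L is nat => nat => real,
  L i j for i < N, j < M.\<close>

definition Lmul :: "nat \<Rightarrow> (nat \<Rightarrow> nat \<Rightarrow> real) \<Rightarrow> (nat \<Rightarrow> real) \<Rightarrow> nat \<Rightarrow> real" where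
  "Lmul M L \<alpha> i = (\<Sum>j<M. L i j * \<alpha> j)"

definition loglik :: "nat \<Rightarrow> nat \<Rightarrow> (nat \<Rightarrow> real) \<Rightarrow> (nat \<Rightarrow> nat) \<Rightarrow>
    (nat \<Rightarrow> nat \<Rightarrow> real) \<Rightarrow> (nat \<Rightarrow> real) \<Rightarrow> real" where
  "loglik N M d P L \<alpha> =
     (\<Sum>i<N. real (P i) * ln (d i) - Lmul M L \<alpha> i * real (P i)
            - d i * exp (- Lmul M L \<alpha> i) - ln (fact (P i)))"

definition Sobj :: "nat \<Rightarrow> nat \<Rightarrow> (nat \<Rightarrow> real) \<Rightarrow> (nat \<Rightarrow> nat) \<Rightarrow>
    (nat \<Rightarrow> nat \<Rightarrow> real) \<Rightarrow> real \<Rightarrow> (nat \<Rightarrow> real) \<Rightarrow> real" where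
  "Sobj N M d P L \<gamma> \<alpha> = loglik N M d P L \<alpha> - \<gamma> * (\<Sum>j<M. (\<alpha> j)\<^sup>2)"

definition orthant :: "nat \<Rightarrow> (nat \<Rightarrow> real) set" where
  "orthant M = {\<alpha>. (\<forall>j<M. 0 \<le> \<alpha> j) \<and> (\<forall>j. M \<le> j \<longrightarrow> \<alpha> j = 0)}"

definition Tmap :: "nat \<Rightarrow> nat \<Rightarrow> (nat \<Rightarrow> real) \<Rightarrow> (nat \<Rightarrow> nat) \<Rightarrow>
    (nat \<Rightarrow> nat \<Rightarrow> real) \<Rightarrow> real \<Rightarrow> (nat \<Rightarrow> real) \<Rightarrow> nat \<Rightarrow> real" where
  "Tmap N M d P L \<gamma> \<alpha> j =
     (if j < M then
        (\<Sum>i<N. L i j * (d i * exp (- Lmul M L \<alpha> i)))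
          / ((\<Sum>i<N. L i j * real (P i)) + 2 * \<gamma> * \<alpha> j) * \<alpha> j
      else 0)"

end

theory Submission
  imports Defs
begin

text \<open>Write \<open>A\<^sub>j(\<alpha>) = (L\<^sup>T(d \<odot> e\<^sup>-\<^sup>L\<^sup>\<alpha>))\<^sub>j\<close> and \<open>B\<^sub>j = (L\<^sup>T P)\<^sub>j\<close>. Then
  \<open>\<partial>S/\<partial>\<alpha>\<^sub>j = A\<^sub>j(\<alpha>) - B\<^sub>j - 2\<gamma>\<alpha>\<^sub>j\<close> and \<open>T\<^sub>\<gamma>\<close> multiplies \<open>\<alpha>\<^sub>j\<close> by \<open>A\<^sub>j(\<alpha>) / (B\<^sub>j + 2\<gamma>\<alpha>\<^sub>j)\<close>,
  so positive fixed points of \<open>T\<^sub>\<gamma>\<close> are stationary points of \<open>S\<close>, and for a limit of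
  positive iterates the ratio tends to \<open>1\<close> on nonzero coordinates and to at most \<open>1\<close> on
  zero coordinates: the limit satisfies the KKT conditions of the orthant.
  Convexity of \<open>exp\<close> gives \<open>S(x) \<le> S(a) + \<nabla>S(a)\<cdot>(x - a) - \<gamma>\<parallel>x - a\<parallel>\<^sup>2\<close>, so a KKT
  point is the unique maximizer.\<close>

definition LTdexp :: "nat \<Rightarrow> nat \<Rightarrow> (nat \<Rightarrow> real) \<Rightarrow> (nat \<Rightarrow> nat \<Rightarrow> real) \<Rightarrow> (nat \<Rightarrow> real) \<Rightarrow> nat \<Rightarrow> real"
  where "LTdexp N M d L a j = (\<Sum>i<N. L i j * (d i * exp (- Lmul M L a i)))"

definition LTP :: "nat \<Rightarrow> (nat \<Rightarrow> nat) \<Rightarrow> (nat \<Rightarrow> nat \<Rightarrow> real) \<Rightarrow> nat \<Rightarrow> real"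
  where "LTP N P L j = (\<Sum>i<N. L i j * real (P i))"

definition Sgrad :: "nat \<Rightarrow> nat \<Rightarrow> (nat \<Rightarrow> real) \<Rightarrow> (nat \<Rightarrow> nat) \<Rightarrow> (nat \<Rightarrow> nat \<Rightarrow> real) \<Rightarrow> real
    \<Rightarrow> (nat \<Rightarrow> real) \<Rightarrow> nat \<Rightarrow> real"
  where "Sgrad N M d P L \<gamma> a j = LTdexp N M d L a j - LTP N P L j - 2 * \<gamma> * a j"

definition kkt_point :: "nat \<Rightarrow> (nat \<Rightarrow> real) \<Rightarrow> (nat \<Rightarrow> real) \<Rightarrow> bool"
  where "kkt_point M g a \<longleftrightarrow> a \<in> orthant M \<and> (\<forall>j<M. g j \<le> 0 \<and> (a j \<noteq> 0 \<longrightarrow> g j = 0))"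

lemma Tmap_eq:
  "Tmap N M d P L \<gamma> a j =
     (if j < M then LTdexp N M d L a j / (LTP N P L j + 2 * \<gamma> * a j) * a j else 0)"
  unfolding Tmap_def LTdexp_def LTP_def by simp

lemma LTdexp_pos:
  assumes "i < N" "0 < L i j" "0 < d i"
    and "\<And>i. i < N \<Longrightarrow> 0 \<le> L i j" "\<And>i. i < N \<Longrightarrow> 0 \<le> d i"
  shows "0 < LTdexp N M d L a j"
  unfolding LTdexp_def by (rule sum_pos2[where i=i]) (use assms in auto)

lemma LTP_pos:
  assumes "i < N" "0 < L i j" "0 < P i" "\<And>i. i < N \<Longrightarrow> 0 \<le> L i j"
  shows "0 < LTP N P L j"
  unfolding LTP_def by (rule sum_pos2[where i=i]) (use assms in auto)

lemma LTdexp_tendsto: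
  assumes "\<And>j. (\<lambda>n. \<alpha> n j) \<longlonglongrightarrow> \<beta> j"
  shows "(\<lambda>n. LTdexp N M d L (\<alpha> n) j) \<longlonglongrightarrow> LTdexp N M d L \<beta> j"
  unfolding LTdexp_def Lmul_def using assms by (auto intro!: tendsto_intros)

lemma loglik_le_linearization:
  assumes d: "\<And>i. i < N \<Longrightarrow> 0 \<le> d i"
  shows "loglik N M d P L x
    \<le> loglik N M d P L a + (\<Sum>j<M. (LTdexp N M d L a j - LTP N P L j) * (x j - a j))"
proof -
  define u where "u i = d i * exp (- Lmul M L a i) - real (P i)" for i
  have term_le: "real (P i) * ln (d i) - Lmul M L x i * real (P i) - d i * exp (- Lmul M L x i)
        - ln (fact (P i))
      \<le> real (P i) * ln (d i) - Lmul M L a i * real (P i) - d i * exp (- Lmul M L a i)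
        - ln (fact (P i)) + u i * (Lmul M L x i - Lmul M L a i)" if "i \<in> {..<N}" for i
  proof -
    define s t where "s = Lmul M L x i" and "t = Lmul M L a i"
    have "exp (- t) * (1 + (t - s)) \<le> exp (- t) * exp (t - s)"
      using exp_ge_add_one_self [of "t - s"] by (rule mult_left_mono) simp
    also have "\<dots> = exp (- s)" by (simp flip: exp_add)
    finally have "d i * (exp (- t) * (1 + (t - s))) \<le> d i * exp (- s)"
      using d that by (intro mult_left_mono) auto
    then show ?thesis unfolding u_def s_def [symmetric] t_def [symmetric] by (simp add: algebra_simps)
  qed
  have "loglik N M d P L x \<le> loglik N M d P L a + (\<Sum>i<N. u i * (Lmul M L x i - Lmul M L a i))"
    unfolding loglik_def sum.distrib [symmetric] by (intro sum_mono term_le)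
  also have "(\<Sum>i<N. u i * (Lmul M L x i - Lmul M L a i)) = (\<Sum>i<N. \<Sum>j<M. u i * L i j * (x j - a j))"
    unfolding Lmul_def by (simp add: sum_distrib_left sum_subtractf [symmetric] algebra_simps)
  also have "\<dots> = (\<Sum>j<M. (\<Sum>i<N. L i j * u i) * (x j - a j))"
    by (subst sum.swap) (simp add: sum_distrib_left mult_ac)
  also have "\<dots> = (\<Sum>j<M. (LTdexp N M d L a j - LTP N P L j) * (x j - a j))"
    unfolding LTdexp_def LTP_def u_def by (simp add: right_diff_distrib sum_subtractf)
  finally show ?thesis .
qed

lemma Sobj_le_linearization:
  assumes "\<And>i. i < N \<Longrightarrow> 0 \<le> d i"
  shows "Sobj N M d P L \<gamma> x \<le> Sobj N M d P L \<gamma> a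
    + (\<Sum>j<M. Sgrad N M d P L \<gamma> a j * (x j - a j)) - \<gamma> * (\<Sum>j<M. (x j - a j)\<^sup>2)"
proof -
  have "(\<Sum>j<M. (x j)\<^sup>2) = (\<Sum>j<M. (a j)\<^sup>2) + (\<Sum>j<M. 2 * a j * (x j - a j)) + (\<Sum>j<M. (x j - a j)\<^sup>2)"
    by (simp add: sum.distrib [symmetric] power2_eq_square algebra_simps)
  moreover have "(\<Sum>j<M. Sgrad N M d P L \<gamma> a j * (x j - a j))
      = (\<Sum>j<M. (LTdexp N M d L a j - LTP N P L j) * (x j - a j)) - \<gamma> * (\<Sum>j<M. 2 * a j * (x j - a j))"
    unfolding Sgrad_def by (simp add: sum_subtractf [symmetric] sum_distrib_left algebra_simps)
  ultimately show ?thesis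
    using loglik_le_linearization [of N d M P L x a, OF assms] unfolding Sobj_def by (simp add: algebra_simps)
qed

lemma kkt_point_unique_maximizer:
  assumes d: "\<And>i. i < N \<Longrightarrow> 0 \<le> d i" and "0 < \<gamma>"
    and kkt: "kkt_point M (Sgrad N M d P L \<gamma> b) b"
    and x: "x \<in> orthant M" and le: "Sobj N M d P L \<gamma> b \<le> Sobj N M d P L \<gamma> x"
  shows "x = b"
proof -
  have "Sgrad N M d P L \<gamma> b j * (x j - b j) \<le> 0" if "j < M" for j
  proof -
    have "Sgrad N M d P L \<gamma> b j \<le> 0" "b j \<noteq> 0 \<Longrightarrow> Sgrad N M d P L \<gamma> b j = 0" "0 \<le> x j"
      using kkt x that unfolding kkt_point_def orthant_def by auto
    then show ?thesis by (cases "b j = 0") (auto simp: mult_nonpos_nonneg)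
  qed
  then have "(\<Sum>j<M. Sgrad N M d P L \<gamma> b j * (x j - b j)) \<le> 0"
    by (intro sum_nonpos) auto
  with Sobj_le_linearization [of N d M P L \<gamma> x b, OF d] le
  have "\<gamma> * (\<Sum>j<M. (x j - b j)\<^sup>2) \<le> 0" by linarith
  with \<open>0 < \<gamma>\<close> have "(\<Sum>j<M. (x j - b j)\<^sup>2) = 0"
    by (simp add: mult_le_0_iff sum_nonneg order_antisym)
  then have "x j = b j" if "j < M" for j
    using that by (subst (asm) sum_nonneg_eq_0_iff) auto
  moreover have "x j = b j" if "M \<le> j" for j
    using x kkt that unfolding kkt_point_def orthant_def by auto
  ultimately show ?thesis by (metis ext not_le)
qed

lemma Lmul_fun_upd_add:
  assumes "j < M"
  shows "Lmul M L (a(j := a j + e)) i = Lmul M L a i + L i j * e"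
proof -
  have "(\<Sum>k<M. L i k * (a(j := a j + e)) k) = (\<Sum>k<M. L i k * a k + (if k = j then L i j * e else 0))"
    by (rule sum.cong) (auto simp: algebra_simps)
  then show ?thesis unfolding Lmul_def using assms by (simp add: sum.distrib)
qed

lemma sum_square_fun_upd_add:
  fixes a :: "nat \<Rightarrow> real"
  assumes "j < M"
  shows "(\<Sum>k<M. ((a(j := a j + e)) k)\<^sup>2) = (\<Sum>k<M. (a k)\<^sup>2) + (2 * a j * e + e\<^sup>2)"
proof -
  have "(\<Sum>k<M. ((a(j := a j + e)) k)\<^sup>2) = (\<Sum>k<M. (a k)\<^sup>2 + (if k = j then 2 * a j * e + e\<^sup>2 else 0))"
    by (rule sum.cong) (auto simp: power2_eq_square algebra_simps)
  then show ?thesis using assms by (simp add: sum.distrib)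
qed

lemma maximizer_stationary_at_pos:
  assumes j: "j < M" and pos: "0 < a j" and a: "a \<in> orthant M"
    and max: "\<And>b. b \<in> orthant M \<Longrightarrow> Sobj N M d P L \<gamma> b \<le> Sobj N M d P L \<gamma> a"
  shows "Sgrad N M d P L \<gamma> a j = 0"
proof -
  define \<psi> where "\<psi> e = (\<Sum>i<N. real (P i) * ln (d i) - (Lmul M L a i + L i j * e) * real (P i)
      - d i * exp (- (Lmul M L a i + L i j * e)) - ln (fact (P i)))
      - \<gamma> * ((\<Sum>k<M. (a k)\<^sup>2) + (2 * a j * e + e\<^sup>2))" for e
  have \<psi>_eq: "\<psi> e = Sobj N M d P L \<gamma> (a(j := a j + e))" for e
    unfolding Sobj_def loglik_def \<psi>_def Lmul_fun_upd_add [OF j] sum_square_fun_upd_add [OF j] by simp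
  have "(\<psi> has_real_derivative
      (\<Sum>i<N. - (L i j * real (P i)) + d i * (exp (- Lmul M L a i) * L i j)) - \<gamma> * (2 * a j)) (at 0)"
    unfolding \<psi>_def by (auto intro!: derivative_eq_intros sum.cong)
  moreover have "(\<Sum>i<N. - (L i j * real (P i)) + d i * (exp (- Lmul M L a i) * L i j)) - \<gamma> * (2 * a j)
      = Sgrad N M d P L \<gamma> a j"
    unfolding Sgrad_def LTdexp_def LTP_def by (simp add: sum.distrib sum_negf sum_subtractf algebra_simps)
  moreover have "\<forall>y. \<bar>0 - y\<bar> < a j \<longrightarrow> \<psi> y \<le> \<psi> 0"
  proof (intro allI impI)
    fix y assume "\<bar>0 - y\<bar> < a j"
    then have "a(j := a j + y) \<in> orthant M" using a j unfolding orthant_def by auto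
    from max [OF this] show "\<psi> y \<le> \<psi> 0" by (simp add: \<psi>_eq)
  qed
  ultimately show ?thesis using DERIV_local_max [OF _ pos] by metis
qed

lemma Tmap_fixed_iff_stationary:
  assumes "j < M" "0 < LTP N P L j + 2 * \<gamma> * a j" "a j \<noteq> 0"
  shows "Tmap N M d P L \<gamma> a j = a j \<longleftrightarrow> Sgrad N M d P L \<gamma> a j = 0"
proof -
  have "Tmap N M d P L \<gamma> a j = a j
      \<longleftrightarrow> LTdexp N M d L a j / (LTP N P L j + 2 * \<gamma> * a j) = 1"
    using assms by (simp add: Tmap_eq mult_cancel_right2 del: times_divide_eq_left)
  also have "\<dots> \<longleftrightarrow> Sgrad N M d P L \<gamma> a j = 0"
    using assms(2) by (auto simp: Sgrad_def divide_eq_1_iff)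
  finally show ?thesis .
qed

lemma maximizer_Tmap_fixed:
  assumes a: "a \<in> orthant M" and den: "\<And>j. j < M \<Longrightarrow> 0 < LTP N P L j + 2 * \<gamma> * a j"
    and max: "\<And>b. b \<in> orthant M \<Longrightarrow> Sobj N M d P L \<gamma> b \<le> Sobj N M d P L \<gamma> a"
  shows "Tmap N M d P L \<gamma> a = a"
proof
  fix j show "Tmap N M d P L \<gamma> a j = a j"
  proof (cases "j < M \<and> a j \<noteq> 0")
    case True
    with a have "0 < a j" by (simp add: orthant_def order_less_le)
    with True have "Sgrad N M d P L \<gamma> a j = 0" by (intro maximizer_stationary_at_pos [OF _ _ a max]) auto
    with True den show ?thesis using Tmap_fixed_iff_stationary by blast
  next
    case False
    then show ?thesis using a unfolding orthant_def by (auto simp: Tmap_eq)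
  qed
qed

lemma Tmap_fixed_pos_kkt_point:
  assumes den: "\<And>j. j < M \<Longrightarrow> 0 < LTP N P L j + 2 * \<gamma> * b j"
    and b: "b \<in> orthant M" "\<forall>j<M. 0 < b j" "Tmap N M d P L \<gamma> b = b"
  shows "kkt_point M (Sgrad N M d P L \<gamma> b) b"
proof -
  have "Sgrad N M d P L \<gamma> b j = 0" if "j < M" for j
  proof -
    have "0 < b j" using b(2) that by blast
    with Tmap_fixed_iff_stationary [of j M N P L \<gamma> b d, OF that den [OF that]] b(3)
    show ?thesis by simp
  qed
  with b(1) show ?thesis by (simp add: kkt_point_def)
qed

lemma Tmap_iterates_pos:
  assumes A: "\<And>j a. j < M \<Longrightarrow> 0 < LTdexp N M d L a j"
    and den: "\<And>j x. j < M \<Longrightarrow> 0 \<le> x \<Longrightarrow> 0 < LTP N P L j + 2 * \<gamma> * x"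
    and init: "\<forall>j<M. 0 < \<alpha> 0 j" and iter: "\<forall>n. \<alpha> (Suc n) = Tmap N M d P L \<gamma> (\<alpha> n)"
  shows "\<forall>j<M. 0 < \<alpha> n j"
proof (induction n)
  case (Suc n)
  show ?case
    using Suc A den less_imp_le iter by (auto simp: Tmap_eq)
qed (use init in simp)

lemma ratio_limit_eq_1:
  fixes x r :: "nat \<Rightarrow> real"
  assumes "\<And>n. x (Suc n) = r n * x n" "x \<longlonglongrightarrow> l" "r \<longlonglongrightarrow> R" "l \<noteq> 0"
  shows "R = 1"
proof -
  have "(\<lambda>n. x (Suc n)) \<longlonglongrightarrow> R * l"
    unfolding assms(1) using assms(2,3) by (auto intro: tendsto_mult)
  with LIMSEQ_Suc [OF assms(2)] have "l = R * l" by (rule LIMSEQ_unique)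
  with \<open>l \<noteq> 0\<close> show ?thesis by simp
qed

lemma ratio_limit_le_1:
  fixes x r :: "nat \<Rightarrow> real"
  assumes pos: "\<And>n. 0 < x n" and rec: "\<And>n. x (Suc n) = r n * x n"
    and "x \<longlonglongrightarrow> 0" and "r \<longlonglongrightarrow> R"
  shows "R \<le> 1"
proof (rule ccontr)
  assume "\<not> R \<le> 1"
  then obtain n0 where n0: "\<And>n. n0 \<le> n \<Longrightarrow> 1 < r n"
    using order_tendstoD(1) [OF \<open>r \<longlonglongrightarrow> R\<close>, of 1] by (auto simp: eventually_sequentially)
  have "x n0 \<le> x n" if "n0 \<le> n" for n
    using that
  proof (induction n rule: dec_induct)
    case (step m)
    have "x m \<le> r m * x m" using n0 [OF step.hyps(1)] pos [of m] by simp
    with step.IH rec [of m] show ?case by simp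
  qed simp
  then have "x n0 \<le> 0" using \<open>x \<longlonglongrightarrow> 0\<close> by (intro LIMSEQ_le_const) auto
  with pos [of n0] show False by simp
qed

lemma Tmap_limit_kkt_point:
  assumes den: "\<And>j x. j < M \<Longrightarrow> 0 \<le> x \<Longrightarrow> 0 < LTP N P L j + 2 * \<gamma> * x"
    and B: "\<And>j. j < M \<Longrightarrow> 0 < LTP N P L j"
    and pos: "\<And>n j. j < M \<Longrightarrow> 0 < \<alpha> n j"
    and iter: "\<And>n. \<alpha> (Suc n) = Tmap N M d P L \<gamma> (\<alpha> n)"
    and conv: "\<And>j. (\<lambda>n. \<alpha> n j) \<longlonglongrightarrow> \<beta> j"
  shows "kkt_point M (Sgrad N M d P L \<gamma> \<beta>) \<beta>"
proof -
  have nonneg: "0 \<le> \<beta> j" if "j < M" for j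
    using pos [OF that] by (intro LIMSEQ_le_const [OF conv]) (auto intro: less_imp_le)
  have "\<beta> j = 0" if "M \<le> j" for j
    using LIMSEQ_unique [OF LIMSEQ_Suc [OF conv [of j]]] that by (simp add: iter Tmap_eq)
  with nonneg have orth: "\<beta> \<in> orthant M" unfolding orthant_def by auto
  have "Sgrad N M d P L \<gamma> \<beta> j \<le> 0 \<and> (\<beta> j \<noteq> 0 \<longrightarrow> Sgrad N M d P L \<gamma> \<beta> j = 0)" if j: "j < M" for j
  proof -
    define r where "r n = LTdexp N M d L (\<alpha> n) j / (LTP N P L j + 2 * \<gamma> * \<alpha> n j)" for n
    define R where "R = LTdexp N M d L \<beta> j / (LTP N P L j + 2 * \<gamma> * \<beta> j)"
    have den_\<beta>: "0 < LTP N P L j + 2 * \<gamma> * \<beta> j" using den [OF j nonneg [OF j]] .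
    have "r \<longlonglongrightarrow> R"
      unfolding r_def R_def using den_\<beta> conv by (auto intro!: tendsto_intros LTdexp_tendsto)
    moreover have rec: "\<alpha> (Suc n) j = r n * \<alpha> n j" for n
      using j by (simp add: iter Tmap_eq r_def)
    ultimately show ?thesis
    proof (cases "\<beta> j = 0")
      case True
      have "R \<le> 1" by (rule ratio_limit_le_1 [where x="\<lambda>n. \<alpha> n j", OF pos [OF j] rec _ \<open>r \<longlonglongrightarrow> R\<close>])
          (use conv [of j] True in simp)
      with True B [OF j] show ?thesis by (simp add: R_def Sgrad_def)
    next
      case False
      have "R = 1" by (rule ratio_limit_eq_1 [OF rec conv \<open>r \<longlonglongrightarrow> R\<close> False])
      with den_\<beta> show ?thesis by (simp add: R_def Sgrad_def)
    qed
  qed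
  with orth show ?thesis unfolding kkt_point_def by blast
qed

theorem mainTheorem4:
  fixes N M :: nat and d :: "nat \<Rightarrow> real" and P :: "nat \<Rightarrow> nat"
    and L :: "nat \<Rightarrow> nat \<Rightarrow> real" and \<gamma> :: real and \<alpha>t :: "nat \<Rightarrow> real"
  assumes N_pos: "0 < N"
    and d_pos: "\<And>i. i < N \<Longrightarrow> 0 < d i"
    and P_last: "0 < P (N - 1)"
    and L_nonneg: "\<And>i j. i < N \<Longrightarrow> j < M \<Longrightarrow> 0 \<le> L i j"
    and L_last: "\<And>j. j < M \<Longrightarrow> 0 < L (N - 1) j"
    and gamma_pos: "0 < \<gamma>"
    and max_in: "\<alpha>t \<in> orthant M"
    and max_is: "\<And>\<beta>. \<beta> \<in> orthant M \<Longrightarrow> Sobj N M d P L \<gamma> \<beta> \<le> Sobj N M d P L \<gamma> \<alpha>t"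
  shows "Tmap N M d P L \<gamma> \<alpha>t = \<alpha>t
    \<and> (\<forall>\<alpha> :: nat \<Rightarrow> nat \<Rightarrow> real.
          (\<forall>j<M. 0 < \<alpha> 0 j) \<and> (\<forall>n. \<alpha> (Suc n) = Tmap N M d P L \<gamma> (\<alpha> n))
          \<longrightarrow> (\<forall>n. \<forall>j<M. 0 < \<alpha> n j))
    \<and> (\<forall>\<beta>. \<beta> \<in> orthant M \<and> (\<forall>j<M. 0 < \<beta> j) \<and> Tmap N M d P L \<gamma> \<beta> = \<beta>
          \<longrightarrow> \<beta> = \<alpha>t)
    \<and> (\<forall>(\<alpha> :: nat \<Rightarrow> nat \<Rightarrow> real) \<beta>.
          (\<forall>j<M. 0 < \<alpha> 0 j) \<and> (\<forall>n. \<alpha> (Suc n) = Tmap N M d P L \<gamma> (\<alpha> n))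
          \<and> (\<forall>j. (\<lambda>n. \<alpha> n j) \<longlonglongrightarrow> \<beta> j)
          \<longrightarrow> \<beta> = \<alpha>t)"
proof -
  have last: "N - 1 < N" and d_nonneg: "\<And>i. i < N \<Longrightarrow> 0 \<le> d i"
    using N_pos d_pos by (auto intro: less_imp_le)
  have A: "0 < LTdexp N M d L a j" if "j < M" for j a
    by (rule LTdexp_pos [where i="N - 1"]) (use last L_last that d_pos L_nonneg d_nonneg in auto)
  have B: "0 < LTP N P L j" if "j < M" for j
    by (rule LTP_pos [where i="N - 1"]) (use last L_last that P_last L_nonneg in auto)
  have den: "\<And>j x. j < M \<Longrightarrow> 0 \<le> x \<Longrightarrow> 0 < LTP N P L j + 2 * \<gamma> * x"
    using B gamma_pos by (simp add: add_pos_nonneg)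
  have unique: "\<beta> = \<alpha>t" if "kkt_point M (Sgrad N M d P L \<gamma> \<beta>) \<beta>" for \<beta>
    using kkt_point_unique_maximizer [OF d_nonneg gamma_pos that max_in] that max_is
    unfolding kkt_point_def by simp
  have nonneg: "0 \<le> \<alpha>t j" for j
    using max_in by (cases "j < M") (auto simp: orthant_def)
  have "Tmap N M d P L \<gamma> \<alpha>t = \<alpha>t"
    by (intro maximizer_Tmap_fixed [OF max_in _ max_is] den nonneg)
  moreover have "\<beta> = \<alpha>t"
    if "\<beta> \<in> orthant M" "\<forall>j<M. 0 < \<beta> j" "Tmap N M d P L \<gamma> \<beta> = \<beta>" for \<beta>
    using that den by (intro unique Tmap_fixed_pos_kkt_point) (auto simp: less_imp_le)
  moreover have "\<beta> = \<alpha>t"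
    if "\<forall>j<M. 0 < \<alpha> 0 j" "\<forall>n. \<alpha> (Suc n) = Tmap N M d P L \<gamma> (\<alpha> n)" "\<forall>j. (\<lambda>n. \<alpha> n j) \<longlonglongrightarrow> \<beta> j"
    for \<alpha> :: "nat \<Rightarrow> nat \<Rightarrow> real" and \<beta>
    using that Tmap_iterates_pos [OF A den] by (intro unique Tmap_limit_kkt_point [OF den B, where \<alpha>=\<alpha>]) auto
  ultimately show ?thesis
    using Tmap_iterates_pos [OF A den] by blast
qed

end
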